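(* Let $n\geq 4$ and let $\gamma: WT_n\to\mathrm{GL}_{n+1}(\mathbb{C})$ be a homogeneous $3$-local representation of the welded twin group $WT_n$. Then $\gamma$ is unfaithful.
   Context: The virtual twin group $VT_n$ has generators $s_1,\dots,s_{n-1},\rho_1,\dots,\rho_{n-1}$ and defining relations: $s_i^2=1$ ($1\le i\le n-1$); $s_is_j=s_js_i$ ($|i-j|\ge2$); $\rho_i\rho_{i+1}\rho_i=\rho_{i+1}\rho_i\rho_{i+1}$ ($1\le i\le n-2$); $\rho_i\rho_j=\rho_j\rho_i$ ($|i-j|\ge2$); $\rho_i^2=1$; $s_i\rho_j=\rho_js_i$ ($|i-j|\ge2$); $\rho_i\rho_{i+1}s_i=s_{i+1}\rho_i\rho_{i+1}$ ($1\le i\le n-2$). The welded twin group $WT_n$ is the quotient of $VT_n$ by the additional relations $\rho_is_{i+1}s_i=s_{i+1}s_i\rho_{i+1}$ ($1\le i\le n-2$). A representation $\gamma:WT_n\to\mathrm{GL}_{n+1}(\mathbb{C})$ is homogeneous $3$-local if there are fixed $M,N\in\mathrm{GL}_3(\mathbb{C})$ with $\gamma(s_i)=\mathrm{diag}(I_{i-1},M,I_{n-i-1})$ and $\gamma(\rho_i)=\mathrm{diag}(I_{i-1},N,I_{n-i-1})$ for all $i$ (block-diagonal, $I_r$ the $r\times r$ identity). Unfaithful means not injective. *)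

theory Defs
  imports Complex_Main "Jordan_Normal_Form.Matrix"
begin

text \<open>Generators of the virtual/welded twin group: S i stands for s_i, R i for rho_i
  (indices 1 .. n-1).  Since every generator is an involution in WT_n, the group WT_n is
  presented as a monoid on these generators; words are lists of generators.\<close>

datatype gen = S nat | R nat

definition gen_idx :: "gen \<Rightarrow> nat" where
  "gen_idx g = (case g of S i \<Rightarrow> i | R i \<Rightarrow> i)"

definition valid_word :: "nat \<Rightarrow> gen list \<Rightarrow> bool" where
  "valid_word n w \<longleftrightarrow> (\<forall>g\<in>set w. 1 \<le> gen_idx g \<and> gen_idx g \<le> n - 1)"

definition far :: "nat \<Rightarrow> nat \<Rightarrow> bool" where
  "far i j \<longleftrightarrow> i + 2 \<le> j \<or> j + 2 \<le> i"

inductive wt_rel :: "nat \<Rightarrow> gen list \<Rightarrow> gen list \<Rightarrow> bool" for n where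
  s_inv: "\<lbrakk>1 \<le> i; i \<le> n - 1\<rbrakk> \<Longrightarrow> wt_rel n [S i, S i] []"
| s_comm: "\<lbrakk>1 \<le> i; i \<le> n - 1; 1 \<le> j; j \<le> n - 1; far i j\<rbrakk>
     \<Longrightarrow> wt_rel n [S i, S j] [S j, S i]"
| r_braid: "\<lbrakk>1 \<le> i; i \<le> n - 2\<rbrakk>
     \<Longrightarrow> wt_rel n [R i, R (i+1), R i] [R (i+1), R i, R (i+1)]"
| r_comm: "\<lbrakk>1 \<le> i; i \<le> n - 1; 1 \<le> j; j \<le> n - 1; far i j\<rbrakk>
     \<Longrightarrow> wt_rel n [R i, R j] [R j, R i]"
| r_inv: "\<lbrakk>1 \<le> i; i \<le> n - 1\<rbrakk> \<Longrightarrow> wt_rel n [R i, R i] []"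
| sr_comm: "\<lbrakk>1 \<le> i; i \<le> n - 1; 1 \<le> j; j \<le> n - 1; far i j\<rbrakk>
     \<Longrightarrow> wt_rel n [S i, R j] [R j, S i]"
| mixed: "\<lbrakk>1 \<le> i; i \<le> n - 2\<rbrakk>
     \<Longrightarrow> wt_rel n [R i, R (i+1), S i] [S (i+1), R i, R (i+1)]"
| welded: "\<lbrakk>1 \<le> i; i \<le> n - 2\<rbrakk>
     \<Longrightarrow> wt_rel n [R i, S (i+1), S i] [S (i+1), S i, R (i+1)]"

inductive wt_eq :: "nat \<Rightarrow> gen list \<Rightarrow> gen list \<Rightarrow> bool" for n where
  refl: "wt_eq n w w"
| sym: "wt_eq n u v \<Longrightarrow> wt_eq n v u"
| trans: "wt_eq n u v \<Longrightarrow> wt_eq n v w \<Longrightarrow> wt_eq n u w"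
| rel: "wt_rel n a b \<Longrightarrow> wt_eq n (u @ a @ v) (u @ b @ v)"

text \<open>diag(I_{i-1}, A, I_{n-i-1}) as an (n+1)x(n+1) matrix; rows/columns are 0-based,
  so the 3x3 block occupies rows and columns i-1, i, i+1.\<close>
definition block_at :: "nat \<Rightarrow> nat \<Rightarrow> complex mat \<Rightarrow> complex mat" where
  "block_at n i A = mat (n+1) (n+1) (\<lambda>(r,c).
      if i - 1 \<le> r \<and> r \<le> i + 1 \<and> i - 1 \<le> c \<and> c \<le> i + 1
      then A $$ (r + 1 - i, c + 1 - i)
      else if r = c then 1 else 0)"

definition gen_mat :: "nat \<Rightarrow> complex mat \<Rightarrow> complex mat \<Rightarrow> gen \<Rightarrow> complex mat" where
  "gen_mat n M N g = (case g of S i \<Rightarrow> block_at n i M | R i \<Rightarrow> block_at n i N)"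

definition word_mat :: "nat \<Rightarrow> complex mat \<Rightarrow> complex mat \<Rightarrow> gen list \<Rightarrow> complex mat" where
  "word_mat n M N w = foldr (\<lambda>g A. gen_mat n M N g * A) w (1\<^sub>m (n+1))"

definition is_hom_3local_rep :: "nat \<Rightarrow> complex mat \<Rightarrow> complex mat \<Rightarrow> bool" where
  "is_hom_3local_rep n M N \<longleftrightarrow>
     M \<in> carrier_mat 3 3 \<and> N \<in> carrier_mat 3 3 \<and> invertible_mat M \<and> invertible_mat N \<and>
     (\<forall>a b. wt_rel n a b \<longrightarrow> word_mat n M N a = word_mat n M N b)"

definition unfaithful :: "nat \<Rightarrow> complex mat \<Rightarrow> complex mat \<Rightarrow> bool" where
  "unfaithful n M N \<longleftrightarrow>
     (\<exists>u v. valid_word n u \<and> valid_word n v \<and> \<not> wt_eq n u v \<and>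
            word_mat n M N u = word_mat n M N v)"

end

theory Submission
  imports Defs
begin

text \<open>Since each generator acts only on a 3x3 block, the relations with indices up to 3 only
  see the first five coordinates, so it suffices to understand the case n = 4.  There the far
  commutations, the involutions, the braid, mixed and welded relations determine M and N up to
  three possibilities: M = N, or both are monomial matrices exchanging the first two basis
  vectors, or both exchange the last two.  In each case the words s_1 \<rho>_1 s_2 \<rho>_2 and
  \<rho>_2 s_1 \<rho>_1 \<rho>_2 have the same image, yet they are different in WT_n: every defining
  relation preserves the parity of the number of s-generators.\<close>

lemma block_at_carrier: "block_at n i A \<in> carrier_mat (n+1) (n+1)"
  by (simp add: block_at_def)

lemma gen_mat_carrier: "gen_mat n M N g \<in> carrier_mat (n+1) (n+1)"
  using block_at_carrier by (simp add: gen_mat_def split: gen.split)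

lemma word_mat_carrier: "word_mat n M N w \<in> carrier_mat (n+1) (n+1)"
  unfolding word_mat_def
  by (induction w) (simp_all add: mult_carrier_mat[OF gen_mat_carrier, simplified])

lemma word_mat_Nil: "word_mat n M N [] = 1\<^sub>m (n + 1)"
  by (simp add: word_mat_def)

lemma word_mat_Cons: "word_mat n M N (g # w) = gen_mat n M N g * word_mat n M N w"
  by (simp add: word_mat_def)

definition count_S :: "gen list \<Rightarrow> nat" where
  "count_S w = length (filter (\<lambda>g. case g of S _ \<Rightarrow> True | R _ \<Rightarrow> False) w)"

lemma wt_eq_count_S_parity:
  assumes "wt_eq n u v" shows "even (count_S u) = even (count_S v)"
proof -
  have "even (count_S a) = even (count_S b)" if "wt_rel n a b" for a b
    using that by cases (simp_all add: count_S_def)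
  with assms show ?thesis by induction (simp_all add: count_S_def)
qed

lemma wt_rel_valid_word: "wt_rel n a b \<Longrightarrow> valid_word n a \<and> valid_word n b"
  by (induction rule: wt_rel.induct) (auto simp: valid_word_def gen_idx_def)

lemma wt_rel_mono: "wt_rel m a b \<Longrightarrow> m \<le> n \<Longrightarrow> wt_rel n a b"
proof (induction rule: wt_rel.induct)
  case (r_braid i) then show ?case using wt_rel.r_braid[of i n] by simp
next
  case (mixed i) then show ?case using wt_rel.mixed[of i n] by simp
next
  case (welded i) then show ?case using wt_rel.welded[of i n] by simp
qed (auto intro: wt_rel.intros)

definition pad_id :: "nat \<Rightarrow> complex mat \<Rightarrow> complex mat" where
  "pad_id k X = four_block_mat X (0\<^sub>m (dim_row X) k) (0\<^sub>m k (dim_col X)) (1\<^sub>m k)"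

lemma pad_id_mult:
  assumes "X \<in> carrier_mat m m" "Y \<in> carrier_mat m m"
  shows "pad_id k X * pad_id k Y = pad_id k (X * Y)"
  using assms unfolding pad_id_def by (subst mult_four_block_mat[of _ m m _ k _ k]) auto

lemma pad_id_inj:
  assumes "X \<in> carrier_mat m m" "Y \<in> carrier_mat m m" "pad_id k X = pad_id k Y"
  shows "X = Y"
proof (rule eq_matI)
  fix i j assume "i < dim_row Y" "j < dim_col Y"
  with assms show "X $$ (i, j) = Y $$ (i, j)"
    by (metis (no_types, lifting) carrier_matD index_mat_four_block(1) pad_id_def trans_less_add1)
qed (use assms in auto)

lemma block_at_pad_id: "i < m \<Longrightarrow> block_at (m + k) i A = pad_id k (block_at m i A)"
  by (rule eq_matI) (auto simp: block_at_def pad_id_def)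

lemma word_mat_pad_id:
  assumes "valid_word m w"
  shows "word_mat (m + k) M N w = pad_id k (word_mat m M N w)"
  using assms
proof (induction w)
  case Nil
  show ?case by (rule eq_matI) (auto simp: word_mat_Nil pad_id_def)
next
  case (Cons g w)
  then have "gen_idx g < m" "valid_word m w" by (auto simp: valid_word_def)
  then have "gen_mat (m + k) M N g = pad_id k (gen_mat m M N g)"
    by (auto simp: gen_mat_def gen_idx_def block_at_pad_id split: gen.split)
  with Cons.IH \<open>valid_word m w\<close> show ?case
    by (simp add: word_mat_Cons pad_id_mult[OF gen_mat_carrier word_mat_carrier])
qed

lemma word_mat_restrict:
  assumes "\<And>a b. wt_rel (m + k) a b \<Longrightarrow> word_mat (m + k) M N a = word_mat (m + k) M N b"
    and "wt_rel m a b"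
  shows "word_mat m M N a = word_mat m M N b"
proof -
  have "pad_id k (word_mat m M N a) = pad_id k (word_mat m M N b)"
    using assms(1)[OF wt_rel_mono[OF assms(2)]] wt_rel_valid_word[OF assms(2)]
    by (simp add: word_mat_pad_id)
  then show ?thesis using pad_id_inj word_mat_carrier by blast
qed

definition mat3 :: "complex \<Rightarrow> complex \<Rightarrow> complex \<Rightarrow> complex \<Rightarrow> complex \<Rightarrow> complex \<Rightarrow>
    complex \<Rightarrow> complex \<Rightarrow> complex \<Rightarrow> complex mat" where
  "mat3 a b c d e f g h k = mat 3 3 (\<lambda>(i, j).
     if i = 0 then (if j = 0 then a else if j = 1 then b else c)
     else if i = 1 then (if j = 0 then d else if j = 1 then e else f)
     else (if j = 0 then g else if j = 1 then h else k))"

lemma mat3_eq_iff: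
  "mat3 a b c d e f g h k = mat3 a' b' c' d' e' f' g' h' k' \<longleftrightarrow>
    a = a' \<and> b = b' \<and> c = c' \<and> d = d' \<and> e = e' \<and> f = f' \<and> g = g' \<and> h = h' \<and> k = k'"
proof
  assume eq: "mat3 a b c d e f g h k = mat3 a' b' c' d' e' f' g' h' k'"
  have "mat3 a b c d e f g h k $$ (i, j) = mat3 a' b' c' d' e' f' g' h' k' $$ (i, j)" for i j
    using eq by simp
  from this[of 0 0] this[of 0 1] this[of 0 2] this[of 1 0] this[of 1 1] this[of 1 2]
    this[of 2 0] this[of 2 1] this[of 2 2]
  show "a = a' \<and> b = b' \<and> c = c' \<and> d = d' \<and> e = e' \<and> f = f' \<and> g = g' \<and> h = h' \<and> k = k'"
    by (simp add: mat3_def)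
qed simp

lemma mat3_exists:
  assumes "A \<in> carrier_mat 3 3"
  shows "\<exists>a b c d e f g h k. A = mat3 a b c d e f g h k"
proof (intro exI eq_matI)
  fix i j
  assume "i < dim_row (mat3 (A $$ (0, 0)) (A $$ (0, 1)) (A $$ (0, 2)) (A $$ (1, 0)) (A $$ (1, 1))
    (A $$ (1, 2)) (A $$ (2, 0)) (A $$ (2, 1)) (A $$ (2, 2)))"
    and "j < dim_col (mat3 (A $$ (0, 0)) (A $$ (0, 1)) (A $$ (0, 2)) (A $$ (1, 0)) (A $$ (1, 1))
    (A $$ (1, 2)) (A $$ (2, 0)) (A $$ (2, 1)) (A $$ (2, 2)))"
  then have "i \<in> {0, 1, 2}" "j \<in> {0, 1, 2}" by (auto simp: mat3_def)
  then show "A $$ (i, j) = mat3 (A $$ (0, 0)) (A $$ (0, 1)) (A $$ (0, 2)) (A $$ (1, 0)) (A $$ (1, 1))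
    (A $$ (1, 2)) (A $$ (2, 0)) (A $$ (2, 1)) (A $$ (2, 2)) $$ (i, j)"
    by (auto simp: mat3_def)
qed (use assms in \<open>auto simp: mat3_def\<close>)

definition swap01 :: "complex \<Rightarrow> complex \<Rightarrow> complex mat" where
  "swap01 a b = mat3 0 a 0 b 0 0 0 0 1"

definition swap12 :: "complex \<Rightarrow> complex \<Rightarrow> complex mat" where
  "swap12 a b = mat3 1 0 0 0 0 a 0 b 0"

lemma sum_upto_5: "(\<Sum>k\<in>{0..<5::nat}. f k) = f 0 + f 1 + f 2 + f 3 + (f 4 :: complex)"
  by (simp add: numeral_eq_Suc atLeast0LessThan lessThan_Suc)

lemmas word_mat_4_entries =
  word_mat_def gen_mat_def block_at_def scalar_prod_def sum_upto_5 mat3_def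

lemma word_mat_4_eqI:
  assumes "\<forall>i\<in>{0, 1, 2, 3, 4}. \<forall>j\<in>{0, 1, 2, 3, 4}.
    word_mat 4 M N u $$ (i, j) = word_mat 4 M N v $$ (i, j)"
  shows "word_mat 4 M N u = word_mat 4 M N v"
proof (rule eq_matI)
  fix i j
  assume "i < dim_row (word_mat 4 M N v)" "j < dim_col (word_mat 4 M N v)"
  then have "i \<in> {0, 1, 2, 3, 4}" "j \<in> {0, 1, 2, 3, 4}"
    using word_mat_carrier[of 4 M N v] by auto
  with assms show "word_mat 4 M N u $$ (i, j) = word_mat 4 M N v $$ (i, j)" by blast
qed (use word_mat_carrier[of 4 M N u] word_mat_carrier[of 4 M N v] in auto)

lemma swap01_witness:
  assumes "a * b = 1" "c * d = 1"
  shows "word_mat 4 (swap01 c d) (swap01 a b) [S 1, R 1, S 2, R 2] =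
    word_mat 4 (swap01 c d) (swap01 a b) [R 2, S 1, R 1, R 2]"
proof -
  have "d * (a * (c * b)) = (a * b) * (c * d)" by (simp only: ac_simps)
  then show ?thesis using assms mult.commute[of a b] mult.commute[of c d]
    by (intro word_mat_4_eqI) (simp add: word_mat_4_entries swap01_def)
qed

lemma swap12_witness:
  assumes "a * b = 1" "c * d = 1"
  shows "word_mat 4 (swap12 c d) (swap12 a b) [S 1, R 1, S 2, R 2] =
    word_mat 4 (swap12 c d) (swap12 a b) [R 2, S 1, R 1, R 2]"
proof -
  have "d * (a * (c * b)) = (a * b) * (c * d)" by (simp only: ac_simps)
  then show ?thesis using assms mult.commute[of a b] mult.commute[of c d]
    by (intro word_mat_4_eqI) (simp add: word_mat_4_entries swap12_def)
qed

lemma equal_generators_witness: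
  assumes "\<And>a b. wt_rel n a b \<Longrightarrow> word_mat n M M a = word_mat n M M b" and "3 \<le> n"
  shows "word_mat n M M [S 1, R 1, S 2, R 2] = word_mat n M M [R 2, S 1, R 1, R 2]"
proof -
  let ?G = "\<lambda>i. gen_mat n M M (S i)"
  have G: "?G i \<in> carrier_mat (n + 1) (n + 1)" for i by (rule gen_mat_carrier)
  have "?G i * ?G i = 1\<^sub>m (n + 1)" if "i \<in> {1, 2}" for i
  proof -
    have "word_mat n M M [S i, S i] = word_mat n M M []"
      using assms(1)[OF wt_rel.s_inv, of i] that assms(2) by auto
    then show ?thesis by (simp only: word_mat_Cons word_mat_Nil right_mult_one_mat[OF G])
  qed
  then have G11: "?G 1 * ?G 1 = 1\<^sub>m (n + 1)" and G22: "?G 2 * ?G 2 = 1\<^sub>m (n + 1)" by auto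
  have R: "gen_mat n M M (R i) = ?G i" for i by (simp add: gen_mat_def)
  have "word_mat n M M [S 1, R 1, S 2, R 2] = ?G 1 * (?G 1 * (?G 2 * ?G 2))"
    by (simp only: word_mat_Cons word_mat_Nil R right_mult_one_mat[OF G])
  also have "\<dots> = 1\<^sub>m (n + 1)" by (simp only: G22 right_mult_one_mat[OF G] G11)
  also have "\<dots> = ?G 2 * ((?G 1 * ?G 1) * ?G 2)" by (simp only: G11 left_mult_one_mat[OF G] G22)
  also have "\<dots> = word_mat n M M [R 2, S 1, R 1, R 2]"
    by (simp only: word_mat_Cons word_mat_Nil R right_mult_one_mat[OF G] assoc_mult_mat[OF G G G])
  finally show ?thesis .
qed

lemma
  shows wt_rel_rho1_rho3: "wt_rel 4 [R 1, R 3] [R 3, R 1]"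
    and wt_rel_s1_rho3: "wt_rel 4 [S 1, R 3] [R 3, S 1]"
    and wt_rel_s3_rho1: "wt_rel 4 [S 3, R 1] [R 1, S 3]"
    and wt_rel_rho_inv: "wt_rel 4 [R 1, R 1] []"
    and wt_rel_s_inv: "wt_rel 4 [S 1, S 1] []"
    and wt_rel_rho_braid: "wt_rel 4 [R 1, R 2, R 1] [R 2, R 1, R 2]"
    and wt_rel_mixed: "wt_rel 4 [R 1, R 2, S 1] [S 2, R 1, R 2]"
    and wt_rel_welded: "wt_rel 4 [R 1, S 2, S 1] [S 2, S 1, R 2]"
  using wt_rel.r_braid[of 1 4] wt_rel.mixed[of 1 4] wt_rel.welded[of 1 4]
  by (auto simp: far_def numeral_2_eq_2 intro: wt_rel.intros)

locale hom_3local_rep4 =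
  fixes M N :: "complex mat"
    and m00 m01 m02 m10 m11 m12 m20 m21 m22 n00 n01 n02 n10 n11 n12 n20 n21 n22 :: complex
  assumes M_eq: "M = mat3 m00 m01 m02 m10 m11 m12 m20 m21 m22"
    and N_eq: "N = mat3 n00 n01 n02 n10 n11 n12 n20 n21 n22"
    and respects: "wt_rel 4 a b \<Longrightarrow> word_mat 4 M N a = word_mat 4 M N b"
begin

lemma rel_entry:
  "wt_rel 4 a b \<Longrightarrow>
    word_mat 4 (mat3 m00 m01 m02 m10 m11 m12 m20 m21 m22)
      (mat3 n00 n01 n02 n10 n11 n12 n20 n21 n22) a $$ (r, c) =
    word_mat 4 (mat3 m00 m01 m02 m10 m11 m12 m20 m21 m22)
      (mat3 n00 n01 n02 n10 n11 n12 n20 n21 n22) b $$ (r, c)"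
  using respects M_eq N_eq by simp

(* The blocks of \<rho>_1 and \<rho>_3 overlap in coordinate 2, so their commuting is a real
   constraint. *)
lemma rho1_rho3_commute:
  "n02 = 0" "n20 = 0" "n12 = 0 \<or> n00 = 1" "n21 = 0 \<or> n00 = 1" "n01 = 0 \<or> n22 = 1"
  "n10 = 0 \<or> n22 = 1" "n12 = 0 \<or> n01 = 0" "n10 = 0 \<or> n21 = 0"
  using rel_entry[OF wt_rel_rho1_rho3, of 0 4] rel_entry[OF wt_rel_rho1_rho3, of 4 0]
    rel_entry[OF wt_rel_rho1_rho3, of 1 2] rel_entry[OF wt_rel_rho1_rho3, of 2 1]
    rel_entry[OF wt_rel_rho1_rho3, of 2 3] rel_entry[OF wt_rel_rho1_rho3, of 3 2]
    rel_entry[OF wt_rel_rho1_rho3, of 1 3] rel_entry[OF wt_rel_rho1_rho3, of 3 1]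
  by (simp_all add: word_mat_4_entries)

lemma s1_rho3_commute:
  "m20 = 0 \<or> n00 = 1" "m21 = 0 \<or> n00 = 1" "m02 = 0 \<or> n01 = 0" "m12 = 0 \<or> n01 = 0"
  "n01 = 0 \<or> m22 = 1" "n10 = 0 \<or> m20 = 0" "n10 = 0 \<or> m21 = 0" "n10 = 0 \<or> m22 = 1"
  using rel_entry[OF wt_rel_s1_rho3, of 2 0] rel_entry[OF wt_rel_s1_rho3, of 2 1]
    rel_entry[OF wt_rel_s1_rho3, of 0 3] rel_entry[OF wt_rel_s1_rho3, of 1 3]
    rel_entry[OF wt_rel_s1_rho3, of 2 3] rel_entry[OF wt_rel_s1_rho3, of 3 0]
    rel_entry[OF wt_rel_s1_rho3, of 3 1] rel_entry[OF wt_rel_s1_rho3, of 3 2]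
  by (simp_all add: word_mat_4_entries)

lemma s3_rho1_commute:
  "n12 = 0 \<or> m00 = 1" "n12 = 0 \<or> m01 = 0" "n12 = 0 \<or> m02 = 0"
  "n21 = 0 \<or> m00 = 1" "m10 = 0 \<or> n21 = 0" "m20 = 0 \<or> n21 = 0"
  using rel_entry[OF wt_rel_s3_rho1, of 1 2] rel_entry[OF wt_rel_s3_rho1, of 1 3]
    rel_entry[OF wt_rel_s3_rho1, of 1 4] rel_entry[OF wt_rel_s3_rho1, of 2 1]
    rel_entry[OF wt_rel_s3_rho1, of 3 1] rel_entry[OF wt_rel_s3_rho1, of 4 1]
  by (simp_all add: word_mat_4_entries)

lemma rho_involutive:
  "n00 * n00 + n01 * n10 = 1" "n01 * (n00 + n11) = 0" "n10 * (n00 + n11) = 0"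
  "n10 * n01 + n11 * n11 + n12 * n21 = 1" "n12 * (n11 + n22) = 0" "n21 * (n11 + n22) = 0"
  "n21 * n12 + n22 * n22 = 1"
  using rel_entry[OF wt_rel_rho_inv, of 0 0] rel_entry[OF wt_rel_rho_inv, of 0 1]
    rel_entry[OF wt_rel_rho_inv, of 1 0] rel_entry[OF wt_rel_rho_inv, of 1 1]
    rel_entry[OF wt_rel_rho_inv, of 1 2] rel_entry[OF wt_rel_rho_inv, of 2 1]
    rel_entry[OF wt_rel_rho_inv, of 2 2]
  by (simp_all add: word_mat_4_entries rho1_rho3_commute(1,2) algebra_simps)

lemma s_involutive:
  "m00 * m00 + m01 * m10 + m02 * m20 = 1" "m00 * m01 + m01 * m11 + m02 * m21 = 0"
  "m10 * m00 + m11 * m10 + m12 * m20 = 0" "m10 * m01 + m11 * m11 + m12 * m21 = 1"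
  "m10 * m02 + m11 * m12 + m12 * m22 = 0" "m20 * m01 + m21 * m11 + m22 * m21 = 0"
  "m20 * m02 + m21 * m12 + m22 * m22 = 1"
  using rel_entry[OF wt_rel_s_inv, of 0 0] rel_entry[OF wt_rel_s_inv, of 0 1]
    rel_entry[OF wt_rel_s_inv, of 1 0] rel_entry[OF wt_rel_s_inv, of 1 1]
    rel_entry[OF wt_rel_s_inv, of 1 2] rel_entry[OF wt_rel_s_inv, of 2 1]
    rel_entry[OF wt_rel_s_inv, of 2 2]
  by (simp_all add: word_mat_4_entries)

lemma rho_braid:
  "n00 * n00 + n01 * (n00 * n10) = n00"
  "n01 * (n00 * n11 + n01 * n21) = 0"
  "n10 * n01 + n11 * (n00 * n11 + n01 * n21) + n12 * (n10 * n11 + n11 * n21) =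
     n00 * (n11 * n00 + n12 * n10) + n01 * (n21 * n00 + n22 * n10)"
  "n10 * (n12 * n12) + n11 * (n22 * n12) = 0"
  "n22 = n21 * (n22 * n12) + n22 * n22"
  using rel_entry[OF wt_rel_rho_braid, of 0 0] rel_entry[OF wt_rel_rho_braid, of 0 1]
    rel_entry[OF wt_rel_rho_braid, of 1 1] rel_entry[OF wt_rel_rho_braid, of 2 3]
    rel_entry[OF wt_rel_rho_braid, of 3 3]
  by (simp_all add: word_mat_4_entries rho1_rho3_commute(1,2))

lemma rho_s_welded:
  "n01 * (m00 * m11 + m01 * m21) = m02 * n10"
  "n10 * m00 + n11 * (m00 * m10 + m01 * m20) + n12 * (m10 * m10 + m11 * m20) =
     m00 * m10 + m01 * m20"
  "n10 * m01 + n11 * (m00 * m11 + m01 * m21) + n12 * (m10 * m11 + m11 * m21) =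
     m00 * (m11 * n00 + m12 * n10) + m01 * (m21 * n00 + m22 * n10)"
  "n10 * m02 + n11 * (m00 * m12 + m01 * m22) + n12 * (m10 * m12 + m11 * m22) =
     m00 * (m11 * n01 + m12 * n11) + m01 * (m21 * n01 + m22 * n11) + m02 * n21"
  "n21 * (m00 * m12 + m01 * m22) + n22 * (m10 * m12 + m11 * m22) =
     m10 * (m11 * n01 + m12 * n11) + m11 * (m21 * n01 + m22 * n11) + m12 * n21"
  using rel_entry[OF wt_rel_welded, of 0 1] rel_entry[OF wt_rel_welded, of 1 0]
    rel_entry[OF wt_rel_welded, of 1 1] rel_entry[OF wt_rel_welded, of 1 2]
    rel_entry[OF wt_rel_welded, of 2 2]
  by (simp_all add: word_mat_4_entries rho1_rho3_commute(1,2))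

lemma rho_corner_eq_one: "n00 = 1 \<or> n22 = 1"
proof (rule ccontr)
  assume corners: "\<not> (n00 = 1 \<or> n22 = 1)"
  then have "n01 = 0" "n10 = 0" using rho1_rho3_commute(5,6) by auto
  then have "n00 * n00 = 1" "n00 * n00 = n00" using rho_involutive(1) rho_braid(1) by auto
  then show False using corners by simp
qed

lemma swap01_case:
  assumes "n00 \<noteq> 1" "n22 = 1"
  shows "\<exists>a b c d. a * b = 1 \<and> c * d = 1 \<and> M = swap01 c d \<and> N = swap01 a b"
proof -
  have n12: "n12 = 0" and n21: "n21 = 0" using assms(1) rho1_rho3_commute(3,4) by auto
  have n01: "n01 \<noteq> 0"
  proof
    assume "n01 = 0"
    then have "n00 * n00 = n00" "n00 * n00 = 1" using rho_braid(1) rho_involutive(1) by auto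
    then show False using assms(1) by simp
  qed
  have n11: "n11 = - n00" using rho_involutive(2) n01 by (simp add: add_eq_0_iff)
  have "n00 * n00 = 0" using rho_braid(2) n01 n11 n21 by simp
  then have n00: "n00 = 0" by simp
  have n10: "n01 * n10 = 1" using rho_involutive(1) n00 by simp
  have m20: "m20 = 0" and m21: "m21 = 0" using s1_rho3_commute(1,2) assms(1) by auto
  have m02: "m02 = 0" and m12: "m12 = 0" and m22: "m22 = 1"
    using s1_rho3_commute(3,4,5) n01 by auto
  have s00: "m00 * m00 + m01 * m10 = 1" using s_involutive(1) m02 by simp
  have s11: "m10 * m01 + m11 * m11 = 1" using s_involutive(4) m12 by simp
  have "m00 * m11 = 0" using rho_s_welded(1) m21 m02 n01 by simp
  moreover have "m00 * m00 = m11 * m11" using s00 s11 by (metis add.commute add_left_cancel mult.commute)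
  ultimately have "m00 = 0" "m11 = 0" by (metis mult_eq_0_iff)+
  then have "M = swap01 m01 m10" "N = swap01 n01 n10"
    using M_eq N_eq n00 n11 n12 n21 assms(2) rho1_rho3_commute(1,2) m02 m12 m20 m21 m22
    by (simp_all add: swap01_def mat3_eq_iff)
  moreover have "m01 * m10 = 1" using s00 \<open>m00 = 0\<close> by simp
  ultimately show ?thesis using n10 by blast
qed

lemma swap12_case:
  assumes "n00 = 1" "n22 \<noteq> 1"
  shows "\<exists>a b c d. a * b = 1 \<and> c * d = 1 \<and> M = swap12 c d \<and> N = swap12 a b"
proof -
  have n01: "n01 = 0" and n10: "n10 = 0" using assms(2) rho1_rho3_commute(5,6) by auto
  have n12: "n12 \<noteq> 0"
  proof
    assume "n12 = 0"
    then have "n22 * n22 = n22" "n22 * n22 = 1" using rho_braid(5) rho_involutive(7) by auto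
    then show False using assms(2) by simp
  qed
  have n11: "n11 = - n22" using rho_involutive(5) n12 by (simp add: add_eq_0_iff)
  have "n22 * n22 = 0" using rho_braid(4) n12 n11 n10 by simp
  then have n22: "n22 = 0" by simp
  have n21: "n12 * n21 = 1" using rho_involutive(7) n22 by (simp add: mult.commute)
  then have "n21 \<noteq> 0" by auto
  then have m00: "m00 = 1" and m10: "m10 = 0" and m20: "m20 = 0"
    using s3_rho1_commute(4,5,6) by auto
  have m01: "m01 = 0" and m02: "m02 = 0" using s3_rho1_commute(2,3) n12 by auto
  have s11: "m11 * m11 + m12 * m21 = 1" using s_involutive(4) m10 by simp
  have s22: "m21 * m12 + m22 * m22 = 1" using s_involutive(7) m20 by simp
  have "m11 * m22 = 0" using rho_s_welded(4) n10 n11 n22 m00 m01 m02 m10 n01 n12 by simp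
  moreover have "m11 * m11 = m22 * m22" using s11 s22 by (metis add.commute add_left_cancel mult.commute)
  ultimately have "m11 = 0" "m22 = 0" by (metis mult_eq_0_iff)+
  then have "M = swap12 m12 m21" "N = swap12 n12 n21"
    using M_eq N_eq assms(1) n01 n10 n11 n22 rho1_rho3_commute(1,2) m00 m01 m02 m10 m20
    by (simp_all add: swap12_def mat3_eq_iff)
  moreover have "m12 * m21 = 1" using s11 \<open>m11 = 0\<close> by simp
  ultimately show ?thesis using n21 by blast
qed

lemma rho_identity_case:
  assumes "n00 = 1" "n11 = 1" "n22 = 1"
  shows "M = N"
proof -
  have "n01 = 0" "n10 = 0" "n12 = 0" "n21 = 0"
    using rho_involutive(2,3,5,6) assms by simp_all
  note N_id = assms this rho1_rho3_commute(1,2)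
  have "m00 = 1" "m01 = 0" "m02 = 0" "m10 = 0" "m11 = 1" "m12 = 0" "m20 = 0" "m21 = 0" "m22 = 1"
    using rel_entry[OF wt_rel_mixed, of 0 0] rel_entry[OF wt_rel_mixed, of 0 1]
      rel_entry[OF wt_rel_mixed, of 0 2] rel_entry[OF wt_rel_mixed, of 1 0]
      rel_entry[OF wt_rel_mixed, of 1 1] rel_entry[OF wt_rel_mixed, of 2 3]
      rel_entry[OF wt_rel_mixed, of 2 0] rel_entry[OF wt_rel_mixed, of 3 2]
      rel_entry[OF wt_rel_mixed, of 2 2]
    by (simp_all add: word_mat_4_entries N_id)
  then show ?thesis using M_eq N_eq N_id by (simp add: mat3_eq_iff)
qed

lemma rho_reflection_upper_case:
  assumes "n00 = 1" "n11 = -1" "n22 = 1" "n01 \<noteq> 0"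
  shows "M = N"
proof -
  have n12: "n12 = 0" using rho1_rho3_commute(7) assms(4) by simp
  have n10: "n10 = 0" using rho_involutive(1) assms(1,4) by simp
  have n21: "n01 * n21 = 1"
    using rho_braid(3) assms(1-3) n10 n12 by (simp add: algebra_simps)
  then have "n21 \<noteq> 0" by auto
  then have m00: "m00 = 1" and m10: "m10 = 0" and m20: "m20 = 0"
    using s3_rho1_commute(4,5,6) by auto
  have m02: "m02 = 0" and m12: "m12 = 0" and m22: "m22 = 1"
    using s1_rho3_commute(3,4,5) assms(4) by auto
  have "m11 * m11 = 1" using s_involutive(4) m10 m12 by simp
  have s01: "m01 * (1 + m11) = 0" using s_involutive(2) m00 m02 by (simp add: algebra_simps)
  have s21: "m21 * (1 + m11) = 0" using s_involutive(6) m22 m20 by (simp add: algebra_simps)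
  have m11: "m11 = -1"
  proof (rule ccontr)
    assume "m11 \<noteq> -1"
    then have "m11 = 1" using \<open>m11 * m11 = 1\<close> by (metis mult_cancel_left1 square_eq_1_iff)
    then have "m01 = 0" "m21 = 0" using s01 s21 by auto
    then show False using rho_s_welded(1) \<open>m11 = 1\<close> m00 m02 assms(4) by simp
  qed
  have m21: "m01 * m21 = 1" using rho_s_welded(1) m11 m00 m02 assms(4) by simp
  have w22: "n21 * m01 - 1 = 1 - m21 * n01"
    using rho_s_welded(5) m00 m10 m11 m12 m22 assms(2,3) by (simp add: algebra_simps)
  have "(m01 - n01) * (m01 - n01) =
      m01 * n01 * ((n21 * m01 - 1) - (1 - m21 * n01))
      + m01 * m01 * (1 - n01 * n21) + n01 * n01 * (1 - m01 * m21)"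
    by (simp add: algebra_simps)
  then have "m01 = n01" using w22 n21 m21 by simp
  moreover from this have "m21 = n21" using n21 m21 assms(4) by (metis mult_cancel_left)
  ultimately show ?thesis
    using M_eq N_eq assms(1-3) n10 n12 rho1_rho3_commute(1,2) m00 m02 m10 m11 m12 m20 m22
    by (simp add: mat3_eq_iff)
qed

lemma rho_reflection_lower_case:
  assumes "n00 = 1" "n11 = -1" "n22 = 1" "n10 \<noteq> 0"
  shows "M = N"
proof -
  have n21: "n21 = 0" using rho1_rho3_commute(8) assms(4) by simp
  have n01: "n01 = 0" using rho_involutive(1) assms(1,4) by simp
  have n12: "n10 * n12 = 1"
    using rho_braid(3) assms(1-3) n01 n21 by (simp add: algebra_simps)
  then have "n12 \<noteq> 0" by auto
  then have m00: "m00 = 1" and m01: "m01 = 0" and m02: "m02 = 0"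
    using s3_rho1_commute(1,2,3) by auto
  have m20: "m20 = 0" and m21: "m21 = 0" and m22: "m22 = 1"
    using s1_rho3_commute(6,7,8) assms(4) by auto
  have "m11 * m11 = 1" using s_involutive(4) m01 m21 by simp
  have s10: "m10 * (1 + m11) = 0" using s_involutive(3) m00 m20 by (simp add: algebra_simps)
  have s12: "m12 * (1 + m11) = 0" using s_involutive(5) m02 m22 by (simp add: algebra_simps)
  have m11: "m11 = -1"
  proof (rule ccontr)
    assume "m11 \<noteq> -1"
    then have "m11 = 1" using \<open>m11 * m11 = 1\<close> by (metis mult_cancel_left1 square_eq_1_iff)
    then have "m10 = 0" "m12 = 0" using s10 s12 by auto
    then show False using rho_s_welded(2) \<open>m11 = 1\<close> m00 m01 m20 assms(4) by simp
  qed
  have w10: "n10 - 2 * m10 + n12 * (m10 * m10) = 0"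
    using rho_s_welded(2) m11 m00 m20 m01 assms(2) by (simp add: algebra_simps)
  have w11: "1 - n12 * m10 = -1 + m12 * n10"
    using rho_s_welded(3) m11 m00 m01 m02 m21 assms(1,2) by (simp add: algebra_simps)
  have "(1 - n12 * m10) * (1 - n12 * m10) =
      n12 * (n10 - 2 * m10 + n12 * (m10 * m10)) + (1 - n10 * n12)"
    by (simp add: algebra_simps)
  then have "n12 * m10 = 1" using w10 n12 by simp
  then have "m10 = n10" using n12 \<open>n12 \<noteq> 0\<close> by (metis mult.commute mult_cancel_left)
  moreover have "m12 * n10 = 1" using w11 \<open>n12 * m10 = 1\<close> by (simp add: algebra_simps)
  then have "m12 = n12" using n12 assms(4) by (metis mult.commute mult_cancel_left)
  ultimately show ?thesis
    using M_eq N_eq assms(1-3) n01 n21 rho1_rho3_commute(1,2) m00 m01 m02 m11 m20 m21 m22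
    by (simp add: mat3_eq_iff)
qed

lemma rho_corners_one_case:
  assumes "n00 = 1" "n22 = 1"
  shows "M = N"
proof -
  have "n10 * n01 = 0" "n12 * n21 = 0" using rho_involutive(1,7) assms by (simp_all add: mult.commute)
  then have "n11 * n11 = 1" using rho_involutive(4) by (metis add_0 add.right_neutral)
  then consider "n11 = 1" | "n11 = -1" by (metis mult_cancel_left1 square_eq_1_iff)
  then show ?thesis
  proof cases
    case 1
    then show ?thesis using rho_identity_case assms by blast
  next
    case 2
    consider "n01 \<noteq> 0" | "n10 \<noteq> 0" | "n01 = 0" "n10 = 0" by blast
    then show ?thesis
    proof cases
      case 3
      then have "n12 * n21 = 2" using rho_braid(3) assms 2 by (simp add: algebra_simps)
      then show ?thesis using \<open>n12 * n21 = 0\<close> by simp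
    qed (use rho_reflection_upper_case rho_reflection_lower_case assms 2 in blast)+
  qed
qed

lemma classification:
  "M = N \<or>
   (\<exists>a b c d. a * b = 1 \<and> c * d = 1 \<and> M = swap01 c d \<and> N = swap01 a b) \<or>
   (\<exists>a b c d. a * b = 1 \<and> c * d = 1 \<and> M = swap12 c d \<and> N = swap12 a b)"
  using rho_corner_eq_one swap01_case swap12_case rho_corners_one_case by blast

lemma kernel_witness:
  "word_mat 4 M N [S 1, R 1, S 2, R 2] = word_mat 4 M N [R 2, S 1, R 1, R 2]"
  using classification
proof (elim disjE exE conjE)
  assume "M = N"
  then show ?thesis using equal_generators_witness[of 4 M] respects by simp
qed (simp_all only: swap01_witness swap12_witness)

end

theorem theorem4p6:
  fixes n :: nat and M N :: "complex mat"
  assumes "n \<ge> 4"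
    and "is_hom_3local_rep n M N"
  shows "unfaithful n M N"
proof -
  obtain k where n: "n = 4 + k" using assms(1) le_Suc_ex by blast
  have rep: "\<And>a b. wt_rel (4 + k) a b \<Longrightarrow> word_mat (4 + k) M N a = word_mat (4 + k) M N b"
    and "M \<in> carrier_mat 3 3" "N \<in> carrier_mat 3 3"
    using assms(2) n by (auto simp: is_hom_3local_rep_def)
  then obtain m00 m01 m02 m10 m11 m12 m20 m21 m22 n00 n01 n02 n10 n11 n12 n20 n21 n22
    where "M = mat3 m00 m01 m02 m10 m11 m12 m20 m21 m22"
      and "N = mat3 n00 n01 n02 n10 n11 n12 n20 n21 n22"
    using mat3_exists by meson
  then interpret hom_3local_rep4 M N m00 m01 m02 m10 m11 m12 m20 m21 m22
      n00 n01 n02 n10 n11 n12 n20 n21 n22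
    using word_mat_restrict[OF rep] by unfold_locales
  let ?u = "[S 1, R 1, S 2, R 2]" and ?v = "[R 2, S 1, R 1, R 2]"
  have "valid_word 4 ?u" "valid_word 4 ?v" by (simp_all add: valid_word_def gen_idx_def)
  then have "word_mat n M N ?u = word_mat n M N ?v" and "valid_word n ?u" "valid_word n ?v"
    using kernel_witness n by (simp_all add: word_mat_pad_id valid_word_def)
  moreover have "\<not> wt_eq n ?u ?v"
  proof
    assume "wt_eq n ?u ?v"
    from wt_eq_count_S_parity[OF this] show False by (simp add: count_S_def)
  qed
  ultimately show ?thesis unfolding unfaithful_def by blast
qed

end
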